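(* Let $X$ be a real normed linear space, let $a_1,\ldots,a_{n+1}$ be affinely independent elements of $X$, let $\Sigma=\mathsf{co}\{a_1,\ldots,a_{n+1}\}$ be the $n$-simplex with these vertices, and let $c$ be a relative interior point of $\Sigma$. Then there exists $\delta>0$ such that whenever $x_1,\ldots,x_{n+1}\in\mathsf{aff}(\Sigma)$ satisfy $\|x_k-a_k\|<\delta$ for each $k\le n+1$, the points $x_1,\ldots,x_{n+1}$ are affinely independent and $c$ is a relative interior point of the $n$-simplex $\mathsf{co}\{x_1,\ldots,x_{n+1}\}$.
   Context: The setting is Bishop's constructive mathematics (intuitionistic logic); "there exists" means the object can be constructed. In a normed space, $x\neq y$ means $\|x-y\|>0$. Vectors $v_1,\ldots,v_n$ are linearly independent if $\sum_i\lambda_iv_i\neq 0$ (i.e. $\|\sum_i\lambda_iv_i\|>0$) whenever $\sum_i|\lambda_i|>0$. Points $a_1,\ldots,a_{n+1}$ are affinely independent if $a_k-a_{n+1}$ ($1\le k\le n$) are linearly independent. $\mathsf{aff}(S)$ is the set of affine combinations $\sum\lambda_ks_k$ ($s_k\in S$, $\sum\lambda_k=1$) and $\mathsf{co}(S)$ the set of convex combinations (additionally $\lambda_k\ge0$). The convex hull of $n+1$ affinely independent points is an $n$-simplex with those vertices. $B_X(x,r)=\{y\in X:\|y-x\|<r\}$. The relative interior of $S\subset X$ is $\mathsf{relint}(S)=\{x\in S:\exists r>0\,(B_X(x,r)\cap\mathsf{aff}(S)\subset S)\}$; its elements are relative interior points. *)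

theory Defs
  imports "HOL-Analysis.Analysis"
begin

definition lin_indep_fam :: "(nat \<Rightarrow> 'a::real_normed_vector) \<Rightarrow> nat \<Rightarrow> bool" where
  "lin_indep_fam v n \<longleftrightarrow>
     (\<forall>l::nat \<Rightarrow> real. (\<Sum>i\<in>{1..n}. \<bar>l i\<bar>) > 0 \<longrightarrow>
        norm (\<Sum>i\<in>{1..n}. l i *\<^sub>R v i) > 0)"

definition aff_indep_fam :: "(nat \<Rightarrow> 'a::real_normed_vector) \<Rightarrow> nat \<Rightarrow> bool" where
  "aff_indep_fam a n \<longleftrightarrow> lin_indep_fam (\<lambda>k. a k - a (Suc n)) n"

definition relint_pt :: "'a::real_normed_vector set \<Rightarrow> 'a \<Rightarrow> bool" where
  "relint_pt S x \<longleftrightarrow> x \<in> S \<and> (\<exists>r>0. ball x r \<inter> affine hull S \<subseteq> S)"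

end

(* Write v k = a k - a (n+1). Linear independence of the v k yields, by compactness of the
   l1 unit sphere of coefficient vectors, some m > 0 with m * sum |l i| <= norm (sum l i v i).
   This lower bound survives perturbations of the v k by less than m/2, so nearby vertices stay
   affinely independent, and by a dimension count they span the same affine hull. The relative
   interior point c has coordinates gamma i > 0 with sum gamma < 1, and the lower bound turns
   closeness of points into closeness of their coordinates: every point of the affine hull
   near c has coordinates near gamma with respect to the perturbed vertices, hence lies in
   their convex hull. *)

theory Submission
  imports Defs
begin

lemma norm_sum_scaleR_le:
  fixes v :: "nat \<Rightarrow> 'a::real_normed_vector"
  assumes "\<And>i. i \<in> I \<Longrightarrow> norm (v i) \<le> \<epsilon>"
  shows "norm (\<Sum>i\<in>I. l i *\<^sub>R v i) \<le> \<epsilon> * (\<Sum>i\<in>I. \<bar>l i\<bar>)"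
proof -
  have "norm (\<Sum>i\<in>I. l i *\<^sub>R v i) \<le> (\<Sum>i\<in>I. \<bar>l i\<bar> * \<epsilon>)"
    by (rule order_trans[OF norm_sum sum_mono]) (simp add: assms mult_left_mono)
  then show ?thesis
    by (simp add: sum_distrib_left mult.commute)
qed

lemma sum_scaleR_lower_bound_perturb:
  fixes v w :: "nat \<Rightarrow> 'a::real_normed_vector"
  assumes "\<And>l. m * (\<Sum>i\<in>I. \<bar>l i\<bar>) \<le> norm (\<Sum>i\<in>I. l i *\<^sub>R v i)"
    and "\<And>i. i \<in> I \<Longrightarrow> norm (w i - v i) \<le> \<epsilon>"
  shows "(m - \<epsilon>) * (\<Sum>i\<in>I. \<bar>l i\<bar>) \<le> norm (\<Sum>i\<in>I. l i *\<^sub>R w i)"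
proof -
  have "(\<Sum>i\<in>I. l i *\<^sub>R v i) = (\<Sum>i\<in>I. l i *\<^sub>R w i) - (\<Sum>i\<in>I. l i *\<^sub>R (w i - v i))"
    by (simp add: scaleR_diff_right sum_subtractf)
  then have "norm (\<Sum>i\<in>I. l i *\<^sub>R v i) \<le> norm (\<Sum>i\<in>I. l i *\<^sub>R w i) + norm (\<Sum>i\<in>I. l i *\<^sub>R (w i - v i))"
    by (simp add: norm_triangle_ineq4)
  also have "norm (\<Sum>i\<in>I. l i *\<^sub>R (w i - v i)) \<le> \<epsilon> * (\<Sum>i\<in>I. \<bar>l i\<bar>)"
    using assms(2) by (rule norm_sum_scaleR_le)
  finally show ?thesis
    using assms(1)[of l] by (simp add: left_diff_distrib)
qed

lemma compact_coeffs_l1_sphere: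
  "compact ((\<Pi>\<^sub>E i\<in>UNIV. if i \<in> I then {-1..1} else {0::real}) \<inter> {l. (\<Sum>i\<in>I. \<bar>l i\<bar>) = 1})"
proof (rule compact_Int_closed)
  have "compactin (product_topology (\<lambda>_. euclideanreal) UNIV)
      (\<Pi>\<^sub>E i\<in>UNIV. if i \<in> I then {-1..1} else {0::real})"
    by (subst compactin_PiE) auto
  then show "compact (\<Pi>\<^sub>E i\<in>UNIV. if i \<in> I then {-1..1} else {0::real})"
    by (simp add: compactin_euclidean_iff euclidean_product_topology)
  show "closed {l :: _ \<Rightarrow> real. (\<Sum>i\<in>I. \<bar>l i\<bar>) = 1}"
    by (intro closed_Collect_eq continuous_intros continuous_on_product_then_coordinatewise continuous_on_id)
qed

lemma normalized_coeffs_mem_l1_sphere: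
  fixes l :: "'i \<Rightarrow> real"
  assumes "finite I" "(\<Sum>i\<in>I. \<bar>l i\<bar>) > 0"
  shows "(\<lambda>i. if i \<in> I then l i / (\<Sum>i\<in>I. \<bar>l i\<bar>) else 0)
    \<in> (\<Pi>\<^sub>E i\<in>UNIV. if i \<in> I then {-1..1} else {0}) \<inter> {l. (\<Sum>i\<in>I. \<bar>l i\<bar>) = 1}"
proof -
  define t where "t = (\<Sum>i\<in>I. \<bar>l i\<bar>)"
  have "l i / t \<in> {-1..1}" if "i \<in> I" for i
  proof -
    have "\<bar>l i\<bar> \<le> t"
      unfolding t_def using assms(1) that by (intro member_le_sum) auto
    with assms(2) show ?thesis
      by (simp add: t_def abs_le_iff divide_le_eq le_divide_eq)
  qed
  moreover have "(\<Sum>i\<in>I. \<bar>l i / t\<bar>) = 1"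
    using assms(2) by (simp add: abs_divide sum_divide_distrib[symmetric] t_def)
  ultimately show ?thesis
    by (simp add: PiE_iff t_def[symmetric] cong: if_cong)
qed

lemma lin_indep_fam_lower_bound:
  fixes v :: "nat \<Rightarrow> 'a::real_normed_vector"
  assumes "lin_indep_fam v n"
  obtains m where "m > 0" "\<And>l. m * (\<Sum>i\<in>{1..n}. \<bar>l i\<bar>) \<le> norm (\<Sum>i\<in>{1..n}. l i *\<^sub>R v i)"
proof (cases "n = 0")
  case True
  then show ?thesis
    using that[of 1] by simp
next
  case False
  define g where "g = (\<lambda>l::nat \<Rightarrow> real. norm (\<Sum>i\<in>{1..n}. l i *\<^sub>R v i))"
  define K where "K = (\<Pi>\<^sub>E i\<in>UNIV. if i \<in> {1..n} then {-1..1} else {0::real}) \<inter> {l. (\<Sum>i\<in>{1..n}. \<bar>l i\<bar>) = 1}"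
  have "compact K"
    unfolding K_def by (rule compact_coeffs_l1_sphere)
  moreover have "continuous_on K g"
    unfolding g_def by (intro continuous_intros continuous_on_product_then_coordinatewise continuous_on_id)
  moreover have "(\<lambda>i. if i = 1 then 1 else 0) \<in> K"
    using False by (simp add: K_def PiE_iff if_distrib[of abs] cong: if_cong)
  ultimately obtain l\<^sub>0 where "l\<^sub>0 \<in> K" and min: "\<And>l. l \<in> K \<Longrightarrow> g l\<^sub>0 \<le> g l"
    by (metis continuous_attains_inf empty_iff)
  have "g l\<^sub>0 > 0"
    using assms \<open>l\<^sub>0 \<in> K\<close> unfolding lin_indep_fam_def K_def g_def by auto
  moreover have "g l\<^sub>0 * (\<Sum>i\<in>{1..n}. \<bar>l i\<bar>) \<le> g l" for l
  proof (cases "(\<Sum>i\<in>{1..n}. \<bar>l i\<bar>) = 0")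
    case False
    define t where "t = (\<Sum>i\<in>{1..n}. \<bar>l i\<bar>)"
    have "t > 0"
      using False unfolding t_def by (simp add: order_le_neq_trans sum_nonneg)
    define l' where "l' i = (if i \<in> {1..n} then l i / t else 0)" for i
    have "l' \<in> K"
      using \<open>t > 0\<close> unfolding K_def l'_def t_def by (intro normalized_coeffs_mem_l1_sphere) auto
    moreover have "g l' = g l / t"
    proof -
      have "(\<Sum>i\<in>{1..n}. l' i *\<^sub>R v i) = inverse t *\<^sub>R (\<Sum>i\<in>{1..n}. l i *\<^sub>R v i)"
        by (simp add: l'_def scaleR_sum_right divide_inverse_commute)
      with \<open>t > 0\<close> show ?thesis
        by (simp add: g_def divide_inverse_commute)
    qed
    ultimately show ?thesis
      using min[of l'] \<open>t > 0\<close> by (simp add: t_def le_divide_eq)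
  qed (simp add: g_def)
  ultimately show ?thesis
    using that unfolding g_def by blast
qed

lemma lin_indep_fam_if_lower_bound:
  assumes "m > 0" and "\<And>l. m * (\<Sum>i\<in>{1..n}. \<bar>l i\<bar>) \<le> norm (\<Sum>i\<in>{1..n}. l i *\<^sub>R v i)"
  shows "lin_indep_fam v n"
  unfolding lin_indep_fam_def
  using assms by (metis mult_pos_pos order_less_le_trans)

lemma lin_indep_fam_coeffs_unique:
  assumes "lin_indep_fam v n"
    and "(\<Sum>i\<in>{1..n}. l i *\<^sub>R v i) = (\<Sum>i\<in>{1..n}. l' i *\<^sub>R v i)"
    and "i \<in> {1..n}"
  shows "l i = l' i"
proof -
  have "(\<Sum>i\<in>{1..n}. (l i - l' i) *\<^sub>R v i) = 0"
    using assms(2) by (simp add: scaleR_diff_left sum_subtractf)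
  then have "(\<Sum>i\<in>{1..n}. \<bar>l i - l' i\<bar>) = 0"
    using assms(1) unfolding lin_indep_fam_def
    by (metis norm_zero less_irrefl sum_abs_ge_zero order_le_less)
  with assms(3) show ?thesis
    by (simp add: sum_nonneg_eq_0_iff)
qed

lemma sum_delta_scaleR:
  fixes v :: "nat \<Rightarrow> 'a::real_vector"
  assumes "finite I" "j \<in> I"
  shows "(\<Sum>i\<in>I. (if i = j then t else 0) *\<^sub>R v i) = t *\<^sub>R v j"
  using assms by (simp add: if_distrib[of "\<lambda>s. s *\<^sub>R _"] cong: if_cong)

lemma lin_indep_fam_inj_on:
  assumes "lin_indep_fam v n"
  shows "inj_on v {1..n}"
proof (rule inj_onI)
  fix i j assume ij: "i \<in> {1..n}" "j \<in> {1..n}" "v i = v j"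
  have "(\<Sum>k\<in>{1..n}. (if k = i then 1 else 0) *\<^sub>R v k) = (\<Sum>k\<in>{1..n}. (if k = j then 1 else 0) *\<^sub>R v k)"
    using ij by (simp add: sum_delta_scaleR)
  from lin_indep_fam_coeffs_unique[OF assms this ij(1)] show "i = j"
    by (auto split: if_splits)
qed

lemma lin_indep_fam_card_image:
  assumes "lin_indep_fam v n"
  shows "card (v ` {1..n}) = n"
  using card_image[OF lin_indep_fam_inj_on[OF assms]] by simp

lemma lin_indep_fam_independent:
  assumes "lin_indep_fam v n"
  shows "independent (v ` {1..n})"
proof (rule independent_if_scalars_zero)
  fix f x assume sum0: "(\<Sum>x\<in>v ` {1..n}. f x *\<^sub>R x) = 0" and "x \<in> v ` {1..n}"
  then obtain j where j: "j \<in> {1..n}" "x = v j" by blast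
  have "(\<Sum>i\<in>{1..n}. f (v i) *\<^sub>R v i) = (\<Sum>i\<in>{1..n}. 0 *\<^sub>R v i)"
    using sum0 sum.reindex[OF lin_indep_fam_inj_on[OF assms], of "\<lambda>x. f x *\<^sub>R x"] by simp
  from lin_indep_fam_coeffs_unique[OF assms this j(1)] show "f x = 0"
    using j by simp
qed simp

lemma span_image_eq_range_sum:
  fixes f :: "'i \<Rightarrow> 'a::real_vector"
  assumes "finite I"
  shows "span (f ` I) = range (\<lambda>u. \<Sum>i\<in>I. u i *\<^sub>R f i)"
proof
  show "span (f ` I) \<subseteq> range (\<lambda>u. \<Sum>i\<in>I. u i *\<^sub>R f i)"
  proof
    fix y assume "y \<in> span (f ` I)"
    then show "y \<in> range (\<lambda>u. \<Sum>i\<in>I. u i *\<^sub>R f i)"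
    proof (induction rule: span_induct_alt)
      case base
      show ?case
        by (rule range_eqI[where x="\<lambda>_. 0"]) simp
    next
      case (step c x y)
      then obtain j u where "j \<in> I" "x = f j" "y = (\<Sum>i\<in>I. u i *\<^sub>R f i)"
        by blast
      then have "c *\<^sub>R x + y = (\<Sum>i\<in>I. (u i + (if i = j then c else 0)) *\<^sub>R f i)"
        using assms by (simp add: scaleR_add_left sum.distrib if_distrib[of "\<lambda>s. s *\<^sub>R _"] cong: if_cong)
      then show ?case
        by (rule range_eqI[where x="\<lambda>i. u i + (if i = j then c else 0)"])
    qed
  qed
  show "range (\<lambda>u. \<Sum>i\<in>I. u i *\<^sub>R f i) \<subseteq> span (f ` I)"
    by (auto intro!: span_sum span_scale intro: span_base)
qed

lemma span_eq_if_independent_card_ge: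
  fixes S T :: "'a::real_vector set"
  assumes "independent S" "S \<subseteq> span T" "finite T" "card T \<le> card S"
  shows "span S = span T"
proof
  show "span S \<subseteq> span T"
    by (rule span_minimal[OF assms(2) subspace_span])
  show "span T \<subseteq> span S"
  proof (rule span_minimal[OF _ subspace_span], rule subsetI, rule ccontr)
    fix y assume "y \<in> T" "y \<notin> span S"
    then have "independent (insert y S)" "insert y S \<subseteq> span T"
      using assms(1,2) by (auto simp: independent_insertI span_base)
    then have "finite (insert y S) \<and> card (insert y S) \<le> card T"
      by (rule independent_span_bound[OF assms(3)])
    moreover have "y \<notin> S"
      using \<open>y \<notin> span S\<close> span_base by blast
    ultimately show False
      using assms(4) by auto
  qed
qed

lemma convex_hull_image_eq_sums:
  fixes f :: "'i \<Rightarrow> 'a::real_vector"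
  assumes "finite I"
  shows "convex hull (f ` I) = {\<Sum>i\<in>I. u i *\<^sub>R f i | u. (\<forall>i\<in>I. 0 \<le> u i) \<and> sum u I = 1}"
    (is "_ = ?C")
proof
  show "convex hull (f ` I) \<subseteq> ?C"
  proof (rule hull_minimal)
    show "f ` I \<subseteq> ?C"
    proof
      fix y assume "y \<in> f ` I"
      then obtain j where "j \<in> I" "y = f j"
        by blast
      with assms show "y \<in> ?C"
        by (auto intro!: exI[of _ "\<lambda>i. if i = j then 1 else 0"]
            simp: if_distrib[of "\<lambda>s. s *\<^sub>R _"] cong: if_cong)
    qed
    show "convex ?C"
    proof (rule convexI)
      fix y z and s t :: real
      assume "y \<in> ?C" "z \<in> ?C" and st: "0 \<le> s" "0 \<le> t" "s + t = 1"
      then obtain u u' where u: "\<forall>i\<in>I. 0 \<le> u i" "sum u I = 1" "y = (\<Sum>i\<in>I. u i *\<^sub>R f i)"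
        and u': "\<forall>i\<in>I. 0 \<le> u' i" "sum u' I = 1" "z = (\<Sum>i\<in>I. u' i *\<^sub>R f i)"
        by blast
      have "s *\<^sub>R y + t *\<^sub>R z = (\<Sum>i\<in>I. (s * u i + t * u' i) *\<^sub>R f i)"
        by (simp add: u(3) u'(3) scaleR_sum_right scaleR_add_left sum.distrib)
      moreover have "(\<Sum>i\<in>I. s * u i + t * u' i) = 1"
        by (simp add: sum.distrib sum_distrib_left[symmetric] u(2) u'(2) st(3))
      ultimately show "s *\<^sub>R y + t *\<^sub>R z \<in> ?C"
        using u(1) u'(1) st by (auto intro!: exI[of _ "\<lambda>i. s * u i + t * u' i"])
    qed
  qed
  show "?C \<subseteq> convex hull (f ` I)"
    using assms by (auto intro!: convex_sum[OF _ convex_convex_hull] simp: hull_inc)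
qed

lemma sum_vertices_eq_base_point:
  fixes x :: "nat \<Rightarrow> 'a::real_vector"
  assumes "(\<Sum>k\<in>{1..Suc n}. l k) = 1"
  shows "(\<Sum>k\<in>{1..Suc n}. l k *\<^sub>R x k) = x (Suc n) + (\<Sum>i\<in>{1..n}. l i *\<^sub>R (x i - x (Suc n)))"
proof -
  have "l (Suc n) = 1 - (\<Sum>i\<in>{1..n}. l i)"
    using assms by simp
  then show ?thesis
    by (simp add: scaleR_diff_right sum_subtractf scaleR_diff_left scaleR_sum_left[symmetric])
qed

lemma affine_hull_vertices_eq:
  fixes x :: "nat \<Rightarrow> 'a::real_vector"
  shows "affine hull (x ` {1..Suc n}) =
    range (\<lambda>u. x (Suc n) + (\<Sum>i\<in>{1..n}. u i *\<^sub>R (x i - x (Suc n))))"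
proof -
  have "affine hull (x ` {1..Suc n}) = (\<lambda>y. x (Suc n) + y) ` span ((\<lambda>y. - x (Suc n) + y) ` x ` {1..Suc n})"
    by (rule affine_hull_span_gen) (simp add: hull_inc)
  also have "(\<lambda>y. - x (Suc n) + y) ` x ` {1..Suc n} = insert 0 ((\<lambda>i. x i - x (Suc n)) ` {1..n})"
    by (auto simp: atLeastAtMostSuc_conv image_image)
  finally show ?thesis
    by (simp add: span_image_eq_range_sum image_image)
qed

lemma convex_hull_vertices_eq:
  fixes x :: "nat \<Rightarrow> 'a::real_vector"
  shows "convex hull (x ` {1..Suc n}) =
    {x (Suc n) + (\<Sum>i\<in>{1..n}. u i *\<^sub>R (x i - x (Suc n))) | u.
       (\<forall>i\<in>{1..n}. 0 \<le> u i) \<and> (\<Sum>i\<in>{1..n}. u i) \<le> 1}"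
    (is "_ = ?B")
  unfolding convex_hull_image_eq_sums[OF finite_atLeastAtMost]
proof (intro antisym subsetI)
  fix y assume "y \<in> {\<Sum>k\<in>{1..Suc n}. l k *\<^sub>R x k | l. (\<forall>k\<in>{1..Suc n}. 0 \<le> l k) \<and> sum l {1..Suc n} = 1}"
  then obtain l where l: "\<forall>k\<in>{1..Suc n}. 0 \<le> l k" "sum l {1..Suc n} = 1"
    and y: "y = (\<Sum>k\<in>{1..Suc n}. l k *\<^sub>R x k)"
    by blast
  have "y = x (Suc n) + (\<Sum>i\<in>{1..n}. l i *\<^sub>R (x i - x (Suc n)))"
    unfolding y by (rule sum_vertices_eq_base_point[OF l(2)])
  moreover have "(\<Sum>i\<in>{1..n}. l i) \<le> 1"
    using l(2) l(1)[rule_format, of "Suc n"] by simp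
  ultimately show "y \<in> ?B"
    using l by auto
next
  fix y assume "y \<in> ?B"
  then obtain u where u: "\<forall>i\<in>{1..n}. 0 \<le> u i" "(\<Sum>i\<in>{1..n}. u i) \<le> 1"
    "y = x (Suc n) + (\<Sum>i\<in>{1..n}. u i *\<^sub>R (x i - x (Suc n)))"
    by blast
  define l where "l = u(Suc n := 1 - (\<Sum>i\<in>{1..n}. u i))"
  have l_eq: "(\<Sum>i\<in>{1..n}. l i) = (\<Sum>i\<in>{1..n}. u i)"
    "(\<Sum>i\<in>{1..n}. l i *\<^sub>R (x i - x (Suc n))) = (\<Sum>i\<in>{1..n}. u i *\<^sub>R (x i - x (Suc n)))"
    by (auto simp: l_def intro!: sum.cong)
  then have "sum l {1..Suc n} = 1"
    by (simp add: l_def)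
  moreover have "y = (\<Sum>k\<in>{1..Suc n}. l k *\<^sub>R x k)"
    unfolding sum_vertices_eq_base_point[OF \<open>sum l {1..Suc n} = 1\<close>] l_eq u(3) ..
  moreover have "\<forall>k\<in>{1..Suc n}. 0 \<le> l k"
    using u(1,2) by (auto simp: l_def le_Suc_eq)
  ultimately show "y \<in> {\<Sum>k\<in>{1..Suc n}. l k *\<^sub>R x k | l. (\<forall>k\<in>{1..Suc n}. 0 \<le> l k) \<and> sum l {1..Suc n} = 1}"
    by blast
qed

text \<open>The x k - x (Suc n) are n independent vectors in the span of the n vectors
  a k - a (Suc n), so they span it.\<close>

lemma affine_hull_eq_if_aff_indep:
  fixes a x :: "nat \<Rightarrow> 'a::real_normed_vector"
  assumes "aff_indep_fam x n" and "\<forall>k\<in>{1..Suc n}. x k \<in> affine hull (a ` {1..Suc n})"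
  shows "affine hull (x ` {1..Suc n}) = affine hull (a ` {1..Suc n})"
proof
  show "affine hull (x ` {1..Suc n}) \<subseteq> affine hull (a ` {1..Suc n})"
    using assms(2) by (intro hull_minimal) (auto simp: affine_affine_hull)
  define V where "V = (\<lambda>i. a i - a (Suc n)) ` {1..n}"
  define W where "W = (\<lambda>i. x i - x (Suc n)) ` {1..n}"
  have in_V: "y - a (Suc n) \<in> span V" if "y \<in> affine hull (a ` {1..Suc n})" for y
    using that unfolding affine_hull_vertices_eq V_def span_image_eq_range_sum[OF finite_atLeastAtMost]
    by auto
  have "W \<subseteq> span V"
  proof
    fix z assume "z \<in> W"
    then obtain i where "i \<in> {1..n}" and z: "z = (x i - a (Suc n)) - (x (Suc n) - a (Suc n))"
      unfolding W_def by auto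
    then have "x i - a (Suc n) \<in> span V" "x (Suc n) - a (Suc n) \<in> span V"
      using assms(2) in_V by auto
    then show "z \<in> span V"
      unfolding z by (rule span_diff)
  qed
  moreover have "independent W" "card W = n"
    using lin_indep_fam_independent lin_indep_fam_card_image assms(1)
    unfolding aff_indep_fam_def W_def by blast+
  moreover have "card V \<le> n"
    unfolding V_def using card_image_le[of "{1..n}"] by simp
  ultimately have "span W = span V"
    by (intro span_eq_if_independent_card_ge) (auto simp: V_def)
  show "affine hull (a ` {1..Suc n}) \<subseteq> affine hull (x ` {1..Suc n})"
  proof
    fix y assume y: "y \<in> affine hull (a ` {1..Suc n})"
    have "x (Suc n) \<in> affine hull (a ` {1..Suc n})"
      using assms(2) by simp
    from span_diff[OF in_V[OF y] in_V[OF this]]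
    have "y - x (Suc n) \<in> span W"
      using \<open>span W = span V\<close> by simp
    then obtain u where "y - x (Suc n) = (\<Sum>i\<in>{1..n}. u i *\<^sub>R (x i - x (Suc n)))"
      by (auto simp: W_def span_image_eq_range_sum)
    then show "y \<in> affine hull (x ` {1..Suc n})"
      unfolding affine_hull_vertices_eq by (auto intro: range_eqI[where x=u] simp: algebra_simps)
  qed
qed

lemma simplex_coords_bounded:
  fixes a :: "nat \<Rightarrow> 'a::real_normed_vector"
  assumes "aff_indep_fam a n"
    and "a (Suc n) + (\<Sum>i\<in>{1..n}. g i *\<^sub>R (a i - a (Suc n))) \<in> convex hull (a ` {1..Suc n})"
  shows "(\<forall>i\<in>{1..n}. 0 \<le> g i) \<and> (\<Sum>i\<in>{1..n}. g i) \<le> 1"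
proof -
  obtain u where u: "\<forall>i\<in>{1..n}. 0 \<le> u i" "(\<Sum>i\<in>{1..n}. u i) \<le> 1"
    and eq: "(\<Sum>i\<in>{1..n}. g i *\<^sub>R (a i - a (Suc n))) = (\<Sum>i\<in>{1..n}. u i *\<^sub>R (a i - a (Suc n)))"
    using assms(2) unfolding convex_hull_vertices_eq by auto
  have "\<forall>i\<in>{1..n}. g i = u i"
    using lin_indep_fam_coeffs_unique[OF assms(1)[unfolded aff_indep_fam_def] eq] by blast
  moreover from this have "(\<Sum>i\<in>{1..n}. g i) = (\<Sum>i\<in>{1..n}. u i)"
    by (intro sum.cong) auto
  ultimately show ?thesis
    using u by auto
qed

lemma simplex_coords_near_relint_pt:
  fixes a :: "nat \<Rightarrow> 'a::real_normed_vector"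
  assumes "aff_indep_fam a n" and "relint_pt (convex hull (a ` {1..Suc n})) c"
  obtains \<rho> where "\<rho> > 0"
    "\<And>g. norm (a (Suc n) + (\<Sum>i\<in>{1..n}. g i *\<^sub>R (a i - a (Suc n))) - c) < \<rho> \<Longrightarrow>
      (\<forall>i\<in>{1..n}. 0 \<le> g i) \<and> (\<Sum>i\<in>{1..n}. g i) \<le> 1"
proof -
  obtain \<rho> where "\<rho> > 0" and ball:
    "ball c \<rho> \<inter> affine hull (convex hull (a ` {1..Suc n})) \<subseteq> convex hull (a ` {1..Suc n})"
    using assms(2) unfolding relint_pt_def by blast
  show ?thesis
  proof (rule that[OF \<open>\<rho> > 0\<close>])
    fix g
    assume near: "norm (a (Suc n) + (\<Sum>i\<in>{1..n}. g i *\<^sub>R (a i - a (Suc n))) - c) < \<rho>"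
    have "a (Suc n) + (\<Sum>i\<in>{1..n}. g i *\<^sub>R (a i - a (Suc n))) \<in> affine hull (convex hull (a ` {1..Suc n}))"
      unfolding affine_hull_convex_hull affine_hull_vertices_eq by (rule rangeI)
    with ball near have "a (Suc n) + (\<Sum>i\<in>{1..n}. g i *\<^sub>R (a i - a (Suc n))) \<in> convex hull (a ` {1..Suc n})"
      by (auto simp: dist_norm norm_minus_commute)
    then show "(\<forall>i\<in>{1..n}. 0 \<le> g i) \<and> (\<Sum>i\<in>{1..n}. g i) \<le> 1"
      by (rule simplex_coords_bounded[OF assms(1)])
  qed
qed

lemma exists_pos_mult_norm_less:
  fixes z :: "'a::real_normed_vector"
  assumes "\<rho> > 0"
  shows "\<exists>t>0. t * norm z < \<rho>"
proof (intro exI conjI)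
  show "\<rho> / (norm z + 1) > 0"
    using assms by (simp add: add_nonneg_pos)
  show "\<rho> / (norm z + 1) * norm z < \<rho>"
    using assms by (simp add: add_nonneg_pos divide_less_eq)
qed

lemma relint_pt_simplex_coords:
  fixes a :: "nat \<Rightarrow> 'a::real_normed_vector"
  assumes "aff_indep_fam a n" and "relint_pt (convex hull (a ` {1..Suc n})) c"
  obtains \<gamma> where "\<forall>i\<in>{1..n}. 0 < \<gamma> i" "(\<Sum>i\<in>{1..n}. \<gamma> i) < 1"
    "c = a (Suc n) + (\<Sum>i\<in>{1..n}. \<gamma> i *\<^sub>R (a i - a (Suc n)))"
proof -
  define v where "v = (\<lambda>i. a i - a (Suc n))"
  obtain \<rho> where "\<rho> > 0" and coords_near_c: "\<And>g. norm (a (Suc n) + (\<Sum>i\<in>{1..n}. g i *\<^sub>R v i) - c) < \<rho> \<Longrightarrow>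
      (\<forall>i\<in>{1..n}. 0 \<le> g i) \<and> (\<Sum>i\<in>{1..n}. g i) \<le> 1"
    using simplex_coords_near_relint_pt[OF assms] unfolding v_def by blast
  obtain \<gamma> where c: "c = a (Suc n) + (\<Sum>i\<in>{1..n}. \<gamma> i *\<^sub>R v i)"
    using assms(2) unfolding relint_pt_def convex_hull_vertices_eq v_def by blast
  txt \<open>Moving c a little in direction - v j, or away from a (Suc n), stays in the simplex.\<close>
  have "0 < \<gamma> j" if "j \<in> {1..n}" for j
  proof -
    obtain t where "t > 0" "t * norm (v j) < \<rho>"
      using exists_pos_mult_norm_less[OF \<open>\<rho> > 0\<close>] by blast
    moreover have "a (Suc n) + (\<Sum>i\<in>{1..n}. (\<gamma> i - (if i = j then t else 0)) *\<^sub>R v i) - c = - (t *\<^sub>R v j)"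
      using that by (simp add: c scaleR_diff_left sum_subtractf sum_delta_scaleR)
    ultimately have "\<forall>i\<in>{1..n}. 0 \<le> \<gamma> i - (if i = j then t else 0)"
      using coords_near_c[of "\<lambda>i. \<gamma> i - (if i = j then t else 0)"] by simp
    from this[rule_format, OF that] \<open>t > 0\<close> show ?thesis
      by simp
  qed
  moreover have "(\<Sum>i\<in>{1..n}. \<gamma> i) < 1"
  proof (rule ccontr)
    assume "\<not> (\<Sum>i\<in>{1..n}. \<gamma> i) < 1"
    obtain t where "t > 0" "t * norm (c - a (Suc n)) < \<rho>"
      using exists_pos_mult_norm_less[OF \<open>\<rho> > 0\<close>] by blast
    moreover have "a (Suc n) + (\<Sum>i\<in>{1..n}. ((1 + t) * \<gamma> i) *\<^sub>R v i) - c = t *\<^sub>R (c - a (Suc n))"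
    proof -
      have "(\<Sum>i\<in>{1..n}. ((1 + t) * \<gamma> i) *\<^sub>R v i) = (1 + t) *\<^sub>R (c - a (Suc n))"
        by (simp add: c scaleR_sum_right)
      then show ?thesis
        by (simp add: algebra_simps)
    qed
    ultimately have "(1 + t) * (\<Sum>i\<in>{1..n}. \<gamma> i) \<le> 1"
      using coords_near_c[of "\<lambda>i. (1 + t) * \<gamma> i"] by (simp add: sum_distrib_left)
    moreover have "1 + t \<le> (1 + t) * (\<Sum>i\<in>{1..n}. \<gamma> i)"
      using \<open>t > 0\<close> \<open>\<not> (\<Sum>i\<in>{1..n}. \<gamma> i) < 1\<close> mult_left_mono[of 1 _ "1 + t"] by simp
    ultimately show False
      using \<open>t > 0\<close> by linarith
  qed
  ultimately show ?thesis
    using that c unfolding v_def by blast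
qed

lemma open_simplex_coords_neighbourhood:
  fixes \<gamma> :: "'i \<Rightarrow> real"
  assumes "finite I" "\<forall>i\<in>I. 0 < \<gamma> i" "sum \<gamma> I < 1"
  obtains \<beta> where "\<beta> > 0"
    "\<And>\<mu>. (\<Sum>i\<in>I. \<bar>\<mu> i - \<gamma> i\<bar>) < \<beta> \<Longrightarrow> (\<forall>i\<in>I. 0 \<le> \<mu> i) \<and> sum \<mu> I \<le> 1"
proof
  define \<beta> where "\<beta> = Min (insert (1 - sum \<gamma> I) (\<gamma> ` I))"
  show "\<beta> > 0"
    using assms by (simp add: \<beta>_def)
  fix \<mu> assume close: "(\<Sum>i\<in>I. \<bar>\<mu> i - \<gamma> i\<bar>) < \<beta>"
  have "0 \<le> \<mu> i" if "i \<in> I" for i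
  proof -
    have "\<bar>\<mu> i - \<gamma> i\<bar> \<le> (\<Sum>i\<in>I. \<bar>\<mu> i - \<gamma> i\<bar>)"
      using assms(1) that by (intro member_le_sum) auto
    moreover have "\<beta> \<le> \<gamma> i"
      using assms(1) that by (simp add: \<beta>_def)
    ultimately show ?thesis
      using close by linarith
  qed
  moreover have "sum \<mu> I \<le> 1"
  proof -
    have "sum \<mu> I - sum \<gamma> I \<le> (\<Sum>i\<in>I. \<bar>\<mu> i - \<gamma> i\<bar>)"
      by (simp add: sum_subtractf[symmetric] sum_mono)
    moreover have "\<beta> \<le> 1 - sum \<gamma> I"
      using assms(1) by (simp add: \<beta>_def)
    ultimately show ?thesis
      using close by linarith
  qed
  ultimately show "(\<forall>i\<in>I. 0 \<le> \<mu> i) \<and> sum \<mu> I \<le> 1"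
    by blast
qed

lemma sum_abs_coeffs_diff_le:
  fixes v w :: "nat \<Rightarrow> 'a::real_normed_vector"
  assumes "\<And>l. m * (\<Sum>i\<in>I. \<bar>l i\<bar>) \<le> norm (\<Sum>i\<in>I. l i *\<^sub>R w i)"
    and "\<And>i. i \<in> I \<Longrightarrow> norm (w i - v i) \<le> \<epsilon>" "0 \<le> \<epsilon>"
    and "\<forall>i\<in>I. 0 \<le> \<gamma> i" "sum \<gamma> I \<le> 1"
  shows "m * (\<Sum>i\<in>I. \<bar>\<mu> i - \<gamma> i\<bar>) \<le>
    dist (p + (\<Sum>i\<in>I. \<mu> i *\<^sub>R w i)) (q + (\<Sum>i\<in>I. \<gamma> i *\<^sub>R v i)) + dist p q + \<epsilon>"
proof -
  have "(\<Sum>i\<in>I. (\<mu> i - \<gamma> i) *\<^sub>R w i) =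
      ((p + (\<Sum>i\<in>I. \<mu> i *\<^sub>R w i)) - (q + (\<Sum>i\<in>I. \<gamma> i *\<^sub>R v i))) - (p - q) - (\<Sum>i\<in>I. \<gamma> i *\<^sub>R (w i - v i))"
    by (simp add: sum_subtractf algebra_simps)
  moreover have "norm (\<Sum>i\<in>I. \<gamma> i *\<^sub>R (w i - v i)) \<le> \<epsilon>"
  proof -
    have "norm (\<Sum>i\<in>I. \<gamma> i *\<^sub>R (w i - v i)) \<le> \<epsilon> * (\<Sum>i\<in>I. \<bar>\<gamma> i\<bar>)"
      using assms(2) by (rule norm_sum_scaleR_le)
    also have "\<dots> \<le> \<epsilon>"
      using assms(3-5) by (simp add: mult_left_le)
    finally show ?thesis .
  qed
  ultimately have "norm (\<Sum>i\<in>I. (\<mu> i - \<gamma> i) *\<^sub>R w i) \<le>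
      dist (p + (\<Sum>i\<in>I. \<mu> i *\<^sub>R w i)) (q + (\<Sum>i\<in>I. \<gamma> i *\<^sub>R v i)) + dist p q + \<epsilon>"
    by (smt (verit) dist_norm norm_triangle_ineq4)
  then show ?thesis
    using assms(1)[of "\<lambda>i. \<mu> i - \<gamma> i"] by linarith
qed

lemma norm_diff_diff_le:
  fixes x y a b :: "'a::real_normed_vector"
  shows "norm ((x - y) - (a - b)) \<le> norm (x - a) + norm (y - b)"
proof -
  have "(x - y) - (a - b) = (x - a) - (y - b)"
    by (simp add: algebra_simps)
  then show ?thesis
    by (metis norm_triangle_ineq4)
qed

lemma perturbed_simplex_contains_near_points:
  fixes a x :: "nat \<Rightarrow> 'a::real_normed_vector"
  assumes "m > 0"
    and lb: "\<And>l. m * (\<Sum>i\<in>{1..n}. \<bar>l i\<bar>) \<le> norm (\<Sum>i\<in>{1..n}. l i *\<^sub>R (x i - x (Suc n)))"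
    and close: "\<And>i. i \<in> {1..n} \<Longrightarrow> norm ((x i - x (Suc n)) - (a i - a (Suc n))) \<le> \<epsilon>" "0 \<le> \<epsilon>"
    and c: "c = a (Suc n) + (\<Sum>i\<in>{1..n}. \<gamma> i *\<^sub>R (a i - a (Suc n)))"
    and near_\<gamma>: "\<And>\<mu>. (\<Sum>i\<in>{1..n}. \<bar>\<mu> i - \<gamma> i\<bar>) < \<beta> \<Longrightarrow>
      (\<forall>i\<in>{1..n}. 0 \<le> \<mu> i) \<and> (\<Sum>i\<in>{1..n}. \<mu> i) \<le> 1"
    and y: "y \<in> affine hull (x ` {1..Suc n})"
      "dist y c + dist (x (Suc n)) (a (Suc n)) + \<epsilon> < m * \<beta>"
  shows "y \<in> convex hull (x ` {1..Suc n})"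
proof -
  have "0 < m * \<beta>"
    using y(2) \<open>0 \<le> \<epsilon>\<close> by (smt (verit) zero_le_dist)
  then have "\<beta> > 0"
    using \<open>m > 0\<close> by (simp add: zero_less_mult_iff)
  then have \<gamma>: "\<forall>i\<in>{1..n}. 0 \<le> \<gamma> i" "(\<Sum>i\<in>{1..n}. \<gamma> i) \<le> 1"
    using near_\<gamma>[of \<gamma>] by simp_all
  obtain \<mu> where y_eq: "y = x (Suc n) + (\<Sum>i\<in>{1..n}. \<mu> i *\<^sub>R (x i - x (Suc n)))"
    using y(1) unfolding affine_hull_vertices_eq by blast
  have "m * (\<Sum>i\<in>{1..n}. \<bar>\<mu> i - \<gamma> i\<bar>) \<le> dist y c + dist (x (Suc n)) (a (Suc n)) + \<epsilon>"
    using sum_abs_coeffs_diff_le[OF lb close \<gamma>, where \<mu>=\<mu> and p="x (Suc n)" and q="a (Suc n)"]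
    unfolding y_eq c by simp
  with y(2) have "m * (\<Sum>i\<in>{1..n}. \<bar>\<mu> i - \<gamma> i\<bar>) < m * \<beta>"
    by linarith
  with \<open>m > 0\<close> have "(\<Sum>i\<in>{1..n}. \<bar>\<mu> i - \<gamma> i\<bar>) < \<beta>"
    by simp
  then have "(\<forall>i\<in>{1..n}. 0 \<le> \<mu> i) \<and> (\<Sum>i\<in>{1..n}. \<mu> i) \<le> 1"
    by (rule near_\<gamma>)
  then show ?thesis
    unfolding convex_hull_vertices_eq y_eq by blast
qed

lemma perturbed_simplex_relint_pt:
  fixes a x :: "nat \<Rightarrow> 'a::real_normed_vector"
  assumes lb: "\<And>l. m * (\<Sum>i\<in>{1..n}. \<bar>l i\<bar>) \<le> norm (\<Sum>i\<in>{1..n}. l i *\<^sub>R (a i - a (Suc n)))"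
    and c: "c = a (Suc n) + (\<Sum>i\<in>{1..n}. \<gamma> i *\<^sub>R (a i - a (Suc n)))"
    and near_\<gamma>: "\<And>\<mu>. (\<Sum>i\<in>{1..n}. \<bar>\<mu> i - \<gamma> i\<bar>) < \<beta> \<Longrightarrow>
      (\<forall>i\<in>{1..n}. 0 \<le> \<mu> i) \<and> (\<Sum>i\<in>{1..n}. \<mu> i) \<le> 1"
    and \<delta>: "0 < \<delta>" "4 * \<delta> \<le> m" "8 * \<delta> \<le> \<beta> * m"
    and x: "\<forall>k\<in>{1..Suc n}. x k \<in> affine hull (a ` {1..Suc n}) \<and> norm (x k - a k) < \<delta>"
  shows "aff_indep_fam x n \<and> relint_pt (convex hull (x ` {1..Suc n})) c"
proof
  have close: "norm ((x i - x (Suc n)) - (a i - a (Suc n))) \<le> 2 * \<delta>" if "i \<in> {1..n}" for i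
  proof -
    have "norm (x i - a i) < \<delta>" "norm (x (Suc n) - a (Suc n)) < \<delta>"
      using x that by auto
    with norm_diff_diff_le[of "x i" "x (Suc n)" "a i" "a (Suc n)"] show ?thesis
      by linarith
  qed
  have lb_x: "(m - 2 * \<delta>) * (\<Sum>i\<in>{1..n}. \<bar>l i\<bar>) \<le> norm (\<Sum>i\<in>{1..n}. l i *\<^sub>R (x i - x (Suc n)))" for l
    using lb close by (rule sum_scaleR_lower_bound_perturb)
  moreover have "m - 2 * \<delta> > 0"
    using \<delta> by simp
  ultimately show "aff_indep_fam x n"
    unfolding aff_indep_fam_def by (rule lin_indep_fam_if_lower_bound[rotated])
  then have hull_eq: "affine hull (x ` {1..Suc n}) = affine hull (a ` {1..Suc n})"
    using x by (intro affine_hull_eq_if_aff_indep) auto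
  have "\<beta> > 0"
    using \<delta> by (intro zero_less_mult_pos2[of \<beta> m]) linarith+
  have "ball c \<delta> \<inter> affine hull (x ` {1..Suc n}) \<subseteq> convex hull (x ` {1..Suc n})"
  proof
    fix y assume y: "y \<in> ball c \<delta> \<inter> affine hull (x ` {1..Suc n})"
    have "dist y c < \<delta>"
      using y by (simp add: dist_commute)
    moreover have "dist (x (Suc n)) (a (Suc n)) < \<delta>"
      using bspec[OF x, of "Suc n"] by (simp add: dist_norm)
    moreover have "\<beta> * m \<le> \<beta> * (2 * (m - 2 * \<delta>))"
      using \<delta> \<open>\<beta> > 0\<close> by (intro mult_left_mono) auto
    ultimately have "dist y c + dist (x (Suc n)) (a (Suc n)) + 2 * \<delta> < (m - 2 * \<delta>) * \<beta>"
      using \<delta>(3) by (simp add: algebra_simps)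
    with y show "y \<in> convex hull (x ` {1..Suc n})"
      using \<delta>(1) by (intro perturbed_simplex_contains_near_points[OF \<open>m - 2 * \<delta> > 0\<close> lb_x close _ c near_\<gamma>]) auto
  qed
  moreover have "c \<in> affine hull (x ` {1..Suc n})"
    unfolding hull_eq unfolding affine_hull_vertices_eq c by (rule rangeI)
  ultimately show "relint_pt (convex hull (x ` {1..Suc n})) c"
    using \<delta>(1) unfolding relint_pt_def affine_hull_convex_hull by auto
qed

theorem theorem29:
  fixes a :: "nat \<Rightarrow> 'a::real_normed_vector" and n :: nat and c :: 'a
  assumes "aff_indep_fam a n"
    and "relint_pt (convex hull (a ` {1..Suc n})) c"
  shows "\<exists>\<delta>>0. \<forall>x :: nat \<Rightarrow> 'a.
           (\<forall>k\<in>{1..Suc n}. x k \<in> affine hull (convex hull (a ` {1..Suc n})) \<and> norm (x k - a k) < \<delta>)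
           \<longrightarrow> aff_indep_fam x n \<and> relint_pt (convex hull (x ` {1..Suc n})) c"
proof -
  obtain m where "m > 0"
    and lb: "\<And>l. m * (\<Sum>i\<in>{1..n}. \<bar>l i\<bar>) \<le> norm (\<Sum>i\<in>{1..n}. l i *\<^sub>R (a i - a (Suc n)))"
    using lin_indep_fam_lower_bound assms(1) unfolding aff_indep_fam_def by blast
  obtain \<gamma> where "\<forall>i\<in>{1..n}. 0 < \<gamma> i" "(\<Sum>i\<in>{1..n}. \<gamma> i) < 1"
    and c: "c = a (Suc n) + (\<Sum>i\<in>{1..n}. \<gamma> i *\<^sub>R (a i - a (Suc n)))"
    using relint_pt_simplex_coords[OF assms] by blast
  then obtain \<beta> where "\<beta> > 0" and near_\<gamma>: "\<And>\<mu>. (\<Sum>i\<in>{1..n}. \<bar>\<mu> i - \<gamma> i\<bar>) < \<beta> \<Longrightarrow>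
      (\<forall>i\<in>{1..n}. 0 \<le> \<mu> i) \<and> (\<Sum>i\<in>{1..n}. \<mu> i) \<le> 1"
    using open_simplex_coords_neighbourhood[OF finite_atLeastAtMost] by blast
  define \<delta> where "\<delta> = min (m / 4) (\<beta> * m / 8)"
  have \<delta>: "0 < \<delta>" "4 * \<delta> \<le> m" "8 * \<delta> \<le> \<beta> * m"
    using \<open>m > 0\<close> \<open>\<beta> > 0\<close> by (auto simp: \<delta>_def)
  show ?thesis
    using perturbed_simplex_relint_pt[OF lb c near_\<gamma> \<delta>] \<delta>(1)
    unfolding affine_hull_convex_hull by blast
qed

end
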